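(* Assume (CVX), (SM), (QSM) and (SCO). Let $L_{\max}=\max\{L_1,\dots,L_n\}$, $\kappa=\ell/\mu$, and let $\tau\ge 1$, $R\ge 1$ be integers. Let the constant step-size satisfy $0<\gamma_k\equiv\gamma\le \frac{1}{\ell\tau+2(\tau-1)L_{\max}\sqrt{\kappa}}$. Then the iterates of deterministic (full-batch) PEARL-SGD satisfy $$\|\mathbf{x}_{\tau R}-\mathbf{x}_\star\|^2\le (1-\gamma\tau\mu\zeta)^R\,\|\mathbf{x}_0-\mathbf{x}_\star\|^2,$$ where $\zeta=2-\gamma\ell\tau-2(\tau-1)\gamma L_{\max}\sqrt{\kappa/3}$, which is positive under the stated step-size condition.
   Context: Setup. Let $n\ge1$, $d_1,\dots,d_n\ge1$, $D=d_1+\dots+d_n$. A joint action is $\mathbf{x}=(x^1,\dots,x^n)\in\mathbb{R}^D$ with $x^i\in\mathbb{R}^{d_i}$; $x^{-i}\in\mathbb{R}^{D-d_i}$ denotes all blocks except the $i$-th, and $f_i(x^i;x^{-i})=f_i(x^1,\dots,x^n)$. For each $i$, $f_i:\mathbb{R}^D\to\mathbb{R}$ is differentiable in $x^i$, and $\nabla f_i(x^i;x^{-i})$ denotes the gradient of $f_i$ with respect to $x^i$ only. The joint gradient operator is $\mathbb{F}(\mathbf{x})=(\nabla f_1(x^1;x^{-1}),\dots,\nabla f_n(x^n;x^{-n}))\in\mathbb{R}^D$. Assumptions. (CVX): for each $i$ and each $x^{-i}$, $f_i(\cdot;x^{-i})$ is convex on $\mathbb{R}^{d_i}$. (SM): for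 each $i$ there is $L_i>0$ with $\|\nabla f_i(x^i;x^{-i})-\nabla f_i(y^i;x^{-i})\|\le L_i\|x^i-y^i\|$ for all $x^i,y^i,x^{-i}$. (QSM): there is a unique $\mathbf{x}_\star$ with $\mathbb{F}(\mathbf{x}_\star)=0$, and $\mu>0$ with $\langle\mathbb{F}(\mathbf{x}),\mathbf{x}-\mathbf{x}_\star\rangle\ge\mu\|\mathbf{x}-\mathbf{x}_\star\|^2$ for all $\mathbf{x}$. (SCO): there is $\ell>0$ with $\langle\mathbb{F}(\mathbf{x}),\mathbf{x}-\mathbf{x}_\star\rangle\ge\frac1\ell\|\mathbb{F}(\mathbf{x})\|^2$ for all $\mathbf{x}$. Deterministic PEARL-SGD: given $\mathbf{x}_0\in\mathbb{R}^D$, synchronization interval $\tau\ge1$, number of rounds $R\ge1$, step-sizes $\gamma_k>0$: for each round $p=0,\dots,R-1$, each player $i$ and each $k=\tau p,\dots,\tau(p+1)-1$, set $x^i_{k+1}=x^i_k-\gamma_k\nabla f_i(x^i_k;x^{-i}_{\tau p})$ (the other players' blocks are frozen at their values at the last synchronization time $\tau p$). Write $\mathbf{x}_k=(x^1_k,\dots,x^n_k)$; the output is $\mathbf{x}_{\tau R}$. *)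

theory Defs
  imports "HOL-Analysis.Analysis"
begin

text \<open>The joint action space R^D is modelled as real^'c, with 'c a finite type of
  D coordinates; blk c < n is the player owning coordinate c, so block i is
  {c. blk c = i} and d_i = card of that set.\<close>

definition proj :: "('c \<Rightarrow> nat) \<Rightarrow> nat \<Rightarrow> real^'c \<Rightarrow> real^'c" where
  "proj blk i v = (\<chi> c. if blk c = i then v $ c else 0)"

definition joint_grad :: "(nat \<Rightarrow> real^'c \<Rightarrow> real^'c) \<Rightarrow> ('c \<Rightarrow> nat) \<Rightarrow> real^'c \<Rightarrow> real^'c" where
  "joint_grad grad blk x = (\<chi> c. grad (blk c) x $ c)"

text \<open>One local step within a round whose synchronisation point is y: every player i
  updates its own block using the gradient at (z^i; y^{-i}).\<close>
definition local_step :: "(nat \<Rightarrow> real^'c \<Rightarrow> real^'c) \<Rightarrow> ('c \<Rightarrow> nat) \<Rightarrow> real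
    \<Rightarrow> real^'c \<Rightarrow> real^'c \<Rightarrow> real^'c" where
  "local_step grad blk \<gamma> y z =
     (\<chi> c. z $ c - \<gamma> * grad (blk c) (y + proj blk (blk c) (z - y)) $ c)"

definition pearl_round :: "(nat \<Rightarrow> real^'c \<Rightarrow> real^'c) \<Rightarrow> ('c \<Rightarrow> nat) \<Rightarrow> real
    \<Rightarrow> nat \<Rightarrow> real^'c \<Rightarrow> real^'c" where
  "pearl_round grad blk \<gamma> \<tau> y = (local_step grad blk \<gamma> y ^^ \<tau>) y"

definition pearl :: "(nat \<Rightarrow> real^'c \<Rightarrow> real^'c) \<Rightarrow> ('c \<Rightarrow> nat) \<Rightarrow> real
    \<Rightarrow> nat \<Rightarrow> nat \<Rightarrow> real^'c \<Rightarrow> real^'c" where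
  "pearl grad blk \<gamma> \<tau> R x0 = (pearl_round grad blk \<gamma> \<tau> ^^ R) x0"

end

theory Submission
  imports Defs
begin

text \<open>Within a round each player runs gradient descent on its own convex L_i-smooth function
  while the other blocks stay frozen, and for gamma L_i \<le> 1 such steps never increase the
  gradient norm. So after k local steps block i has moved by at most gamma k |grad_i(y)| and the
  local gradients differ from F(y) by at most L_max gamma k |F(y)| in norm: a round is the step
  y - gamma tau F(y) up to an error of norm at most L_max gamma^2 tau (tau - 1) / 2 |F(y)|.
  Quasi-strong monotonicity and star-cocoercivity make the unperturbed step a contraction, and
  together give |F(y)| |y - x*| \<le> sqrt kappa <F(y), y - x*>, which lets the contraction absorb
  the error.\<close>

section \<open>Convex functions with Lipschitz gradient\<close>

lemma has_real_derivative_along_line: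
  fixes g :: "'a::real_inner \<Rightarrow> real"
  assumes "\<And>v. (g has_derivative (\<lambda>h. G v \<bullet> h)) (at v)"
  shows "((\<lambda>t. g (x + t *\<^sub>R d)) has_real_derivative G (x + t *\<^sub>R d) \<bullet> d) (at t within S)"
proof -
  have "((\<lambda>t. x + t *\<^sub>R d) has_derivative (\<lambda>s. s *\<^sub>R d)) (at t within S)"
    by (auto intro!: derivative_eq_intros)
  from has_derivative_compose[OF this assms]
  have "((\<lambda>t. g (x + t *\<^sub>R d)) has_derivative (\<lambda>s. G (x + t *\<^sub>R d) \<bullet> (s *\<^sub>R d))) (at t within S)" .
  moreover have "(\<lambda>s. G (x + t *\<^sub>R d) \<bullet> (s *\<^sub>R d)) = (*) (G (x + t *\<^sub>R d) \<bullet> d)"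
    by (auto simp: mult.commute)
  ultimately show ?thesis
    unfolding has_field_derivative_def by simp
qed

lemma convex_on_gradient_lower_bound:
  fixes g :: "'a::real_inner \<Rightarrow> real"
  assumes C: "convex_on UNIV g" and D: "\<And>v. (g has_derivative (\<lambda>h. G v \<bullet> h)) (at v)"
  shows "g x + G x \<bullet> (y - x) \<le> g y"
proof -
  let ?h = "\<lambda>t. g (x + t *\<^sub>R (y - x))"
  have "convex_on UNIV ?h"
  proof (rule convex_onI)
    fix s t a :: real assume "0 < a" "a < 1"
    moreover have "x + ((1 - a) * s + a * t) *\<^sub>R (y - x)
        = (1 - a) *\<^sub>R (x + s *\<^sub>R (y - x)) + a *\<^sub>R (x + t *\<^sub>R (y - x))"
      by (simp add: algebra_simps)
    ultimately show "?h ((1 - a) *\<^sub>R s + a *\<^sub>R t) \<le> (1 - a) * ?h s + a * ?h t"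
      using convex_onD[OF C, of a "x + s *\<^sub>R (y - x)" "x + t *\<^sub>R (y - x)"] by simp
  qed simp
  then have "(G (x + 0 *\<^sub>R (y - x)) \<bullet> (y - x)) * (1 - 0) \<le> ?h 1 - ?h 0"
    by (rule convex_on_imp_above_tangent)
      (use has_real_derivative_along_line[OF D, of x "y - x" 0 UNIV] in auto)
  then show ?thesis by simp
qed

lemma lipschitz_gradient_upper_bound:
  fixes g :: "'a::real_inner \<Rightarrow> real"
  assumes D: "\<And>v. (g has_derivative (\<lambda>h. G v \<bullet> h)) (at v)"
    and Lip: "\<And>u w. norm (G u - G w) \<le> L * norm (u - w)" and L: "0 \<le> L"
  shows "g y \<le> g x + G x \<bullet> (y - x) + L * (norm (y - x))\<^sup>2"
proof -
  let ?z = "\<lambda>t. x + t *\<^sub>R (y - x)"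
  obtain t where t: "0 < t" "t < 1"
    and mvt: "g (?z 1) - g (?z 0) = (1 - 0) * (G (?z t) \<bullet> (y - x))"
    using MVT2[of 0 1 "\<lambda>t. g (?z t)" "\<lambda>t. G (?z t) \<bullet> (y - x)"]
      has_real_derivative_along_line[OF D, of x "y - x" _ UNIV] by auto
  have "G (?z t) \<bullet> (y - x) - G x \<bullet> (y - x) = (G (?z t) - G x) \<bullet> (y - x)"
    by (simp add: inner_diff_left)
  also have "\<dots> \<le> norm (G (?z t) - G x) * norm (y - x)"
    by (rule norm_cauchy_schwarz)
  also have "\<dots> \<le> L * norm (t *\<^sub>R (y - x)) * norm (y - x)"
    using Lip[of "?z t" x] by (intro mult_right_mono) auto
  also have "\<dots> = t * (L * (norm (y - x))\<^sup>2)"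
    using t by (simp add: power2_eq_square)
  also have "\<dots> \<le> L * (norm (y - x))\<^sup>2"
    using t L by (intro mult_left_le_one_le) auto
  finally show ?thesis using mvt by simp
qed

lemma lipschitz_gradient_bregman_lower_bound:
  fixes g :: "'a::real_inner \<Rightarrow> real"
  assumes C: "convex_on UNIV g" and D: "\<And>v. (g has_derivative (\<lambda>h. G v \<bullet> h)) (at v)"
    and Lip: "\<And>u w. norm (G u - G w) \<le> L * norm (u - w)" and L: "0 < L"
  shows "g w + G w \<bullet> (u - w) + (norm (G u - G w))\<^sup>2 / (4 * L) \<le> g u"
proof -
  define \<Delta> where "\<Delta> = G u - G w"
  define z where "z = u - (1 / (2 * L)) *\<^sub>R \<Delta>"
  have "g w + G w \<bullet> (z - w) \<le> g z"
    by (rule convex_on_gradient_lower_bound[OF C D])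
  moreover have "g z \<le> g u + G u \<bullet> (z - u) + L * (norm (z - u))\<^sup>2"
    by (rule lipschitz_gradient_upper_bound[OF D Lip]) (use L in simp)
  moreover have "G w \<bullet> (z - w) = G w \<bullet> (u - w) - (G w \<bullet> \<Delta>) / (2 * L)"
  proof -
    have "z - w = (u - w) - (1 / (2 * L)) *\<^sub>R \<Delta>" by (simp add: z_def)
    then show ?thesis by (simp add: inner_diff_right)
  qed
  moreover have "G u \<bullet> (z - u) + L * (norm (z - u))\<^sup>2
      = - (G u \<bullet> \<Delta>) / (2 * L) + (norm \<Delta>)\<^sup>2 / (4 * L)"
  proof -
    have "z - u = - (1 / (2 * L)) *\<^sub>R \<Delta>" by (simp add: z_def)
    moreover have "L * (norm \<Delta> / (2 * L))\<^sup>2 = (norm \<Delta>)\<^sup>2 / (4 * L)"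
      using L by (simp add: power2_eq_square)
    ultimately show ?thesis using L by simp
  qed
  moreover have "(G u \<bullet> \<Delta>) / (2 * L) - (G w \<bullet> \<Delta>) / (2 * L) = (norm \<Delta>)\<^sup>2 / (2 * L)"
  proof -
    have "G u \<bullet> \<Delta> - G w \<bullet> \<Delta> = (norm \<Delta>)\<^sup>2"
      by (simp add: \<Delta>_def inner_diff_left power2_norm_eq_inner)
    then show ?thesis by (simp flip: diff_divide_distrib)
  qed
  moreover have "(norm \<Delta>)\<^sup>2 / (2 * L) = (norm \<Delta>)\<^sup>2 / (4 * L) + (norm \<Delta>)\<^sup>2 / (4 * L)"
    by (simp add: field_simps)
  ultimately show ?thesis unfolding \<Delta>_def by linarith
qed

lemma lipschitz_gradient_cocoercive:
  fixes g :: "'a::real_inner \<Rightarrow> real"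
  assumes C: "convex_on UNIV g" and D: "\<And>v. (g has_derivative (\<lambda>h. G v \<bullet> h)) (at v)"
    and Lip: "\<And>u w. norm (G u - G w) \<le> L * norm (u - w)" and L: "0 < L"
  shows "(norm (G u - G w))\<^sup>2 / (2 * L) \<le> (G u - G w) \<bullet> (u - w)"
proof -
  have "g w + G w \<bullet> (u - w) + (norm (G u - G w))\<^sup>2 / (4 * L) \<le> g u"
    and "g u + G u \<bullet> (w - u) + (norm (G u - G w))\<^sup>2 / (4 * L) \<le> g w"
    using lipschitz_gradient_bregman_lower_bound[OF C D Lip L, of w u]
      lipschitz_gradient_bregman_lower_bound[OF C D Lip L, of u w]
    by (simp_all add: norm_minus_commute)
  moreover have "(G u - G w) \<bullet> (u - w) = - (G w \<bullet> (u - w)) - G u \<bullet> (w - u)"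
    by (simp add: inner_diff_left inner_diff_right)
  moreover have "(norm (G u - G w))\<^sup>2 / (2 * L)
      = (norm (G u - G w))\<^sup>2 / (4 * L) + (norm (G u - G w))\<^sup>2 / (4 * L)"
    by (simp add: field_simps)
  ultimately show ?thesis by linarith
qed

lemma gradient_step_norm_le:
  fixes g :: "'a::real_inner \<Rightarrow> real"
  assumes C: "convex_on UNIV g" and D: "\<And>v. (g has_derivative (\<lambda>h. G v \<bullet> h)) (at v)"
    and Lip: "\<And>u w. norm (G u - G w) \<le> L * norm (u - w)" and L: "0 < L"
    and \<gamma>: "0 < \<gamma>" "\<gamma> * L \<le> 1"
  shows "norm (G (w - \<gamma> *\<^sub>R G w)) \<le> norm (G w)"
proof -
  define \<Delta> where "\<Delta> = G w - G (w - \<gamma> *\<^sub>R G w)"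
  have "(norm \<Delta>)\<^sup>2 / (2 * L) \<le> \<gamma> * (\<Delta> \<bullet> G w)"
    using lipschitz_gradient_cocoercive[OF C D Lip L, of w "w - \<gamma> *\<^sub>R G w"] by (simp add: \<Delta>_def)
  moreover have "(norm \<Delta>)\<^sup>2 / (2 * L) - \<gamma> * ((norm \<Delta>)\<^sup>2 / 2) = (1 - \<gamma> * L) * ((norm \<Delta>)\<^sup>2 / (2 * L))"
    using L by (simp add: field_simps)
  moreover have "0 \<le> (1 - \<gamma> * L) * ((norm \<Delta>)\<^sup>2 / (2 * L))"
    using \<gamma> L by simp
  ultimately have "\<gamma> * ((norm \<Delta>)\<^sup>2 / 2) \<le> \<gamma> * (\<Delta> \<bullet> G w)"
    by linarith
  then have "(norm \<Delta>)\<^sup>2 \<le> 2 * (\<Delta> \<bullet> G w)"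
    using \<gamma> by (simp add: mult_le_cancel_left_pos)
  moreover have "(norm (G (w - \<gamma> *\<^sub>R G w)))\<^sup>2 = (norm (G w))\<^sup>2 - 2 * (\<Delta> \<bullet> G w) + (norm \<Delta>)\<^sup>2"
  proof -
    have "G (w - \<gamma> *\<^sub>R G w) = G w - \<Delta>" by (simp add: \<Delta>_def)
    then show ?thesis
      by (simp add: power2_norm_eq_inner inner_diff_left inner_diff_right inner_commute)
  qed
  ultimately have "(norm (G (w - \<gamma> *\<^sub>R G w)))\<^sup>2 \<le> (norm (G w))\<^sup>2"
    by linarith
  then show ?thesis
    by (rule power2_le_imp_le) simp
qed

section \<open>One perturbed gradient step\<close>

lemma norm_mult_norm_le_sqrt_inner:
  fixes F r :: "'a::real_inner"
  assumes \<mu>: "0 < \<mu>" and ell: "0 \<le> ell"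
    and sF: "\<mu> * (norm r)\<^sup>2 \<le> F \<bullet> r" and aF: "(norm F)\<^sup>2 \<le> ell * (F \<bullet> r)"
  shows "norm F * norm r \<le> sqrt (ell / \<mu>) * (F \<bullet> r)"
proof -
  have s0: "0 \<le> F \<bullet> r"
    using sF \<mu> by (metis mult_nonneg_nonneg order_trans less_imp_le zero_le_power2)
  have "(norm r)\<^sup>2 \<le> (F \<bullet> r) / \<mu>"
    using sF \<mu> by (simp add: field_simps)
  then have "(norm F)\<^sup>2 * (norm r)\<^sup>2 \<le> (ell * (F \<bullet> r)) * ((F \<bullet> r) / \<mu>)"
    using aF ell s0 by (intro mult_mono) auto
  also have "\<dots> = (sqrt (ell / \<mu>) * (F \<bullet> r))\<^sup>2"
    using ell \<mu> by (simp add: power_mult_distrib power2_eq_square[of "F \<bullet> r"])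
  finally have "(norm F * norm r)\<^sup>2 \<le> (sqrt (ell / \<mu>) * (F \<bullet> r))\<^sup>2"
    by (simp add: power_mult_distrib)
  then show ?thesis
    by (rule power2_le_imp_le) (use ell \<mu> s0 in simp)
qed

lemma strong_monotone_constant_le_cocoercive_constant:
  fixes F r :: "'a::real_inner"
  assumes \<mu>: "0 < \<mu>" and ell: "0 \<le> ell" and r: "r \<noteq> 0"
    and sF: "\<mu> * (norm r)\<^sup>2 \<le> F \<bullet> r" and aF: "(norm F)\<^sup>2 \<le> ell * (F \<bullet> r)"
  shows "\<mu> \<le> ell"
proof -
  have "0 < \<mu> * (norm r)\<^sup>2" using \<mu> r by simp
  with sF have s: "0 < F \<bullet> r" by linarith
  have "F \<bullet> r \<le> norm F * norm r"
    by (rule norm_cauchy_schwarz)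
  also have "\<dots> \<le> sqrt (ell / \<mu>) * (F \<bullet> r)"
    by (rule norm_mult_norm_le_sqrt_inner[OF \<mu> ell sF aF])
  finally have "1 \<le> sqrt (ell / \<mu>)"
    using s by simp
  then show ?thesis
    using \<mu> by simp
qed

lemma perturbed_gradient_step_bound:
  fixes r F E :: "'a::real_inner"
  assumes \<mu>: "0 < \<mu>" and ell: "0 \<le> ell" and \<gamma>: "0 \<le> \<gamma>" and T: "0 \<le> T" and \<beta>: "0 \<le> \<beta>"
    and step: "\<gamma> * ell * T \<le> 1"
    and sF: "\<mu> * (norm r)\<^sup>2 \<le> F \<bullet> r" and aF: "(norm F)\<^sup>2 \<le> ell * (F \<bullet> r)"
    and EB: "norm E \<le> \<beta> * norm F"
  shows "(norm (r - (\<gamma> * T) *\<^sub>R F - \<gamma> *\<^sub>R E))\<^sup>2 \<le> (norm r)\<^sup>2 - (F \<bullet> r) *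
           (2 * \<gamma> * T - \<gamma>\<^sup>2 * T\<^sup>2 * ell - 2 * \<gamma> * \<beta> * sqrt (ell / \<mu>) - \<gamma>\<^sup>2 * \<beta>\<^sup>2 * ell)"
proof -
  define s where "s = F \<bullet> r"
  define u where "u = r - (\<gamma> * T) *\<^sub>R F"
  have s0: "0 \<le> s"
    using sF \<mu> unfolding s_def by (metis mult_nonneg_nonneg order_trans less_imp_le zero_le_power2)
  have "(norm u)\<^sup>2 = (norm r)\<^sup>2 - 2 * (\<gamma> * T) * s + (\<gamma> * T)\<^sup>2 * (norm F)\<^sup>2"
    unfolding u_def s_def power2_norm_eq_inner
    by (simp add: inner_diff_left inner_diff_right inner_commute power2_eq_square algebra_simps)
  also have "\<dots> \<le> (norm r)\<^sup>2 - 2 * (\<gamma> * T) * s + (\<gamma> * T)\<^sup>2 * (ell * s)"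
    using mult_left_mono[OF aF, of "(\<gamma> * T)\<^sup>2"] unfolding s_def by simp
  finally have u2: "(norm u)\<^sup>2 \<le> (norm r)\<^sup>2 - 2 * (\<gamma> * T) * s + (\<gamma> * T)\<^sup>2 * (ell * s)" .
  have "(\<gamma> * T)\<^sup>2 * (ell * s) \<le> (\<gamma> * T) * s"
  proof -
    have "(\<gamma> * T)\<^sup>2 * (ell * s) = (\<gamma> * T * s) * (\<gamma> * ell * T)"
      by (simp add: power2_eq_square algebra_simps)
    also have "\<dots> \<le> \<gamma> * T * s"
      using step \<gamma> T s0 by (intro mult_left_le) auto
    finally show ?thesis .
  qed
  moreover have "0 \<le> \<gamma> * T * s"
    using \<gamma> T s0 by simp
  ultimately have "(norm u)\<^sup>2 \<le> (norm r)\<^sup>2"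
    using u2 by linarith
  then have u: "norm u \<le> norm r"
    by (rule power2_le_imp_le) simp
  have "norm (r - (\<gamma> * T) *\<^sub>R F - \<gamma> *\<^sub>R E) \<le> norm u + \<gamma> * (\<beta> * norm F)"
  proof -
    have "norm (r - (\<gamma> * T) *\<^sub>R F - \<gamma> *\<^sub>R E) \<le> norm u + norm (\<gamma> *\<^sub>R E)"
      unfolding u_def by (rule norm_triangle_ineq4)
    moreover have "norm (\<gamma> *\<^sub>R E) \<le> \<gamma> * (\<beta> * norm F)"
      using EB \<gamma> by (simp add: mult_left_mono)
    ultimately show ?thesis by linarith
  qed
  then have "(norm (r - (\<gamma> * T) *\<^sub>R F - \<gamma> *\<^sub>R E))\<^sup>2 \<le> (norm u + \<gamma> * (\<beta> * norm F))\<^sup>2"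
    by (rule power_mono) simp
  also have "\<dots> = (norm u)\<^sup>2 + 2 * \<gamma> * \<beta> * (norm F * norm u) + \<gamma>\<^sup>2 * \<beta>\<^sup>2 * (norm F)\<^sup>2"
    by (simp add: power2_eq_square algebra_simps)
  also have "\<dots> \<le> (norm u)\<^sup>2 + 2 * \<gamma> * \<beta> * (sqrt (ell / \<mu>) * s) + \<gamma>\<^sup>2 * \<beta>\<^sup>2 * (ell * s)"
  proof -
    have "norm F * norm u \<le> norm F * norm r"
      using u by (simp add: mult_left_mono)
    also have "\<dots> \<le> sqrt (ell / \<mu>) * s"
      unfolding s_def by (rule norm_mult_norm_le_sqrt_inner[OF \<mu> ell sF aF])
    finally have "2 * \<gamma> * \<beta> * (norm F * norm u) \<le> 2 * \<gamma> * \<beta> * (sqrt (ell / \<mu>) * s)"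
      using \<gamma> \<beta> by (simp add: mult_left_mono)
    moreover have "\<gamma>\<^sup>2 * \<beta>\<^sup>2 * (norm F)\<^sup>2 \<le> \<gamma>\<^sup>2 * \<beta>\<^sup>2 * (ell * s)"
      using mult_left_mono[OF aF, of "\<gamma>\<^sup>2 * \<beta>\<^sup>2"] unfolding s_def by simp
    ultimately show ?thesis by linarith
  qed
  also have "\<dots> \<le> (norm r)\<^sup>2 - s *
           (2 * \<gamma> * T - \<gamma>\<^sup>2 * T\<^sup>2 * ell - 2 * \<gamma> * \<beta> * sqrt (ell / \<mu>) - \<gamma>\<^sup>2 * \<beta>\<^sup>2 * ell)"
    using u2 by (simp add: power2_eq_square algebra_simps)
  finally show ?thesis unfolding s_def .
qed

definition pearl_zeta :: "real \<Rightarrow> real \<Rightarrow> real \<Rightarrow> real \<Rightarrow> real \<Rightarrow> real" where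
  "pearl_zeta \<mu> ell Lm \<gamma> T = 2 - \<gamma> * ell * T - 2 * (T - 1) * \<gamma> * Lm * sqrt (ell / \<mu> / 3)"

lemma pearl_zeta_nonneg:
  assumes \<mu>: "0 < \<mu>" and ell: "0 \<le> ell" and \<gamma>: "0 \<le> \<gamma>" and T: "1 \<le> T" and Lm: "0 \<le> Lm"
    and step: "\<gamma> * (ell * T + 2 * (T - 1) * Lm * sqrt (ell / \<mu>)) \<le> 1"
  shows "0 \<le> pearl_zeta \<mu> ell Lm \<gamma> T"
proof -
  have "sqrt (ell / \<mu> / 3) \<le> sqrt (ell / \<mu>)"
    using ell \<mu> by (simp add: divide_le_cancel field_simps)
  then have "2 * (T - 1) * \<gamma> * Lm * sqrt (ell / \<mu> / 3) \<le> 2 * (T - 1) * \<gamma> * Lm * sqrt (ell / \<mu>)"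
    using T \<gamma> Lm by (intro mult_left_mono) auto
  with step show ?thesis
    unfolding pearl_zeta_def by (simp add: algebra_simps)
qed

lemma pearl_contraction_factor_nonneg:
  assumes \<mu>: "0 < \<mu>" and \<mu>_le: "\<mu> \<le> ell" and \<gamma>: "0 \<le> \<gamma>" and T: "1 \<le> T" and Lm: "0 \<le> Lm"
    and step: "\<gamma> * (ell * T + 2 * (T - 1) * Lm * sqrt (ell / \<mu>)) \<le> 1"
  shows "0 \<le> 1 - \<gamma> * T * \<mu> * pearl_zeta \<mu> ell Lm \<gamma> T"
proof -
  define t where "t = \<gamma> * ell * T"
  define \<zeta> where "\<zeta> = pearl_zeta \<mu> ell Lm \<gamma> T"
  have ell: "0 \<le> ell" using \<mu> \<mu>_le by simp
  have \<zeta>0: "0 \<le> \<zeta>"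
    unfolding \<zeta>_def by (rule pearl_zeta_nonneg[OF \<mu> ell \<gamma> T Lm step])
  have "0 \<le> 2 * (T - 1) * \<gamma> * Lm * sqrt (ell / \<mu> / 3)"
    using T \<gamma> Lm ell \<mu> by simp
  then have \<zeta>t: "\<zeta> \<le> 2 - t"
    unfolding \<zeta>_def t_def pearl_zeta_def by linarith
  have "\<gamma> * T * \<mu> * \<zeta> \<le> \<gamma> * T * ell * \<zeta>"
    using \<mu>_le \<gamma> T \<zeta>0 by (intro mult_right_mono mult_left_mono) auto
  also have "\<dots> = t * \<zeta>"
    unfolding t_def by simp
  also have "\<dots> \<le> t * (2 - t)"
    using \<zeta>t \<gamma> T ell unfolding t_def by (intro mult_left_mono) auto
  also have "\<dots> = 1 - (t - 1)\<^sup>2"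
    by (simp add: power2_eq_square algebra_simps)
  also have "\<dots> \<le> 1"
    by simp
  finally show ?thesis
    unfolding \<zeta>_def by simp
qed

lemma pearl_zeta_le_round_coefficient:
  assumes \<mu>: "0 < \<mu>" and \<mu>_le: "\<mu> \<le> ell" and \<gamma>: "0 \<le> \<gamma>" and T: "1 \<le> T" and Lm: "0 \<le> Lm"
    and step: "\<gamma> * (ell * T + 2 * (T - 1) * Lm * sqrt (ell / \<mu>)) \<le> 1"
  shows "\<gamma> * T * pearl_zeta \<mu> ell Lm \<gamma> T
    \<le> 2 * \<gamma> * T - \<gamma>\<^sup>2 * T\<^sup>2 * ell - 2 * \<gamma> * (Lm * \<gamma> * T * (T - 1) / 2) * sqrt (ell / \<mu>)
       - \<gamma>\<^sup>2 * (Lm * \<gamma> * T * (T - 1) / 2)\<^sup>2 * ell"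
proof -
  define q where "q = sqrt (ell / \<mu> / 3)"
  define s where "s = sqrt (3::real)"
  define A where "A = \<gamma> * ell * T"
  define B where "B = \<gamma> * Lm * (T - 1)"
  have s: "s\<^sup>2 = 3" "0 < s" "27 / 16 \<le> s"
    unfolding s_def by (simp, simp, rule real_le_rsqrt, simp add: power2_eq_square)
  have sq: "sqrt (ell / \<mu>) = s * q"
    unfolding s_def q_def by (simp flip: real_sqrt_mult)
  have q: "1 / 3 \<le> q\<^sup>2" "0 < q"
    using \<mu> \<mu>_le unfolding q_def by auto
  have AB: "0 \<le> A" "0 \<le> B"
    unfolding A_def B_def using \<gamma> \<mu> \<mu>_le T Lm by auto
  have step': "A + B * (2 * s * q) \<le> 1"
    using step unfolding A_def B_def sq by (simp add: algebra_simps)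
  have "1 \<le> 8 * (2 * s - 3) * (1 / 3)"
    using s by simp
  also have "\<dots> \<le> 8 * (2 * s - 3) * q\<^sup>2"
    using q s by (intro mult_left_mono) auto
  also have "\<dots> = (4 * (2 - s) * q) * (2 * s * q)"
    using s by (simp add: algebra_simps power2_eq_square)
  finally have "B * (2 * s * q) \<le> (4 * (2 - s) * q) * (2 * s * q)"
    using step' AB by linarith
  then have "B \<le> 4 * (2 - s) * q"
    using s q by (simp add: mult_le_cancel_right)
  moreover have "A * B \<le> B"
  proof (rule mult_left_le_one_le)
    have "0 \<le> B * (2 * s * q)"
      using AB s q by simp
    then show "A \<le> 1"
      using step' by linarith
  qed (use AB in auto)
  \<comment> \<open>The factor 1/sqrt 3 in zeta is chosen so that this holds:
    8 (2 sqrt 3 - 3) q^2 \<ge> 1 since kappa \<ge> 1.\<close>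
  ultimately have key: "A * B / 4 \<le> (2 - s) * q"
    by linarith
  have "2 * \<gamma> * T - \<gamma>\<^sup>2 * T\<^sup>2 * ell - 2 * \<gamma> * (Lm * \<gamma> * T * (T - 1) / 2) * sqrt (ell / \<mu>)
       - \<gamma>\<^sup>2 * (Lm * \<gamma> * T * (T - 1) / 2)\<^sup>2 * ell - \<gamma> * T * pearl_zeta \<mu> ell Lm \<gamma> T
     = (\<gamma>\<^sup>2 * T * (T - 1) * Lm) * ((2 - s) * q - A * B / 4)"
    unfolding pearl_zeta_def A_def B_def sq q_def[symmetric] by (simp add: field_simps power2_eq_square)
  moreover have "0 \<le> (\<gamma>\<^sup>2 * T * (T - 1) * Lm) * ((2 - s) * q - A * B / 4)"
    using T Lm key by simp
  ultimately show ?thesis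
    by linarith
qed

section \<open>Block projections\<close>

lemma proj_nth [simp]: "proj blk i v $ c = (if blk c = i then v $ c else 0)"
  by (simp add: proj_def)

lemma proj_add: "proj blk i (u + v) = proj blk i u + proj blk i v"
  by (simp add: vec_eq_iff)

lemma proj_diff: "proj blk i (u - v) = proj blk i u - proj blk i v"
  by (simp add: vec_eq_iff)

lemma proj_scaleR: "proj blk i (a *\<^sub>R v) = a *\<^sub>R proj blk i v"
  by (simp add: vec_eq_iff)

lemma proj_zero [simp]: "proj blk i 0 = 0"
  by (simp add: vec_eq_iff)

lemma proj_proj [simp]: "proj blk i (proj blk i v) = proj blk i v"
  by (simp add: vec_eq_iff)

lemma linear_proj: "linear (proj blk i)"
  by (rule linearI) (simp_all add: proj_add proj_scaleR)

lemma norm_proj_le: "norm (proj blk i v) \<le> norm v"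
  by (rule norm_le_componentwise_cart) simp

lemma power2_norm_eq_sum_proj:
  fixes v :: "real^'c::finite"
  assumes "\<And>c. blk c < n"
  shows "(norm v)\<^sup>2 = (\<Sum>i<n. (norm (proj blk i v))\<^sup>2)"
proof -
  have norm_sq: "(norm w)\<^sup>2 = (\<Sum>c\<in>UNIV. (w $ c)\<^sup>2)" for w :: "real^'c"
    unfolding power2_norm_eq_inner inner_vec_def by (simp add: power2_eq_square)
  have "(\<Sum>i<n. (norm (proj blk i v))\<^sup>2) = (\<Sum>i<n. \<Sum>c\<in>UNIV. if blk c = i then (v $ c)\<^sup>2 else 0)"
    unfolding norm_sq by (intro sum.cong) auto
  also have "\<dots> = (\<Sum>c\<in>UNIV. \<Sum>i<n. if blk c = i then (v $ c)\<^sup>2 else 0)"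
    by (rule sum.swap)
  also have "\<dots> = (norm v)\<^sup>2"
    using assms by (simp add: sum.delta' norm_sq)
  finally show ?thesis ..
qed

lemma block_gradient_in_block:
  fixes \<phi> :: "real^'c::finite \<Rightarrow> real"
  assumes "GDERIV (\<lambda>v. \<phi> (x + proj blk i v)) 0 :> D"
  shows "proj blk i D = D"
proof -
  let ?\<psi> = "\<lambda>v. \<phi> (x + proj blk i v)"
  have d: "(?\<psi> has_derivative (\<lambda>h. h \<bullet> D)) (at 0)"
    using assms by (simp add: gderiv_def)
  have "(proj blk i has_derivative proj blk i) (at 0)"
    by (rule linear_imp_has_derivative[OF linear_proj])
  then have "((\<lambda>v. ?\<psi> (proj blk i v)) has_derivative (\<lambda>h. proj blk i h \<bullet> D)) (at 0)"
    using has_derivative_compose[of "proj blk i" _ 0 UNIV ?\<psi> "\<lambda>h. h \<bullet> D"] d by simp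
  then have "(?\<psi> has_derivative (\<lambda>h. proj blk i h \<bullet> D)) (at 0)"
    by simp
  with d have D: "h \<bullet> D = proj blk i h \<bullet> D" for h
    using has_derivative_unique by metis
  show ?thesis
    unfolding vec_eq_iff
  proof
    fix c
    have "blk c \<noteq> i \<Longrightarrow> proj blk i (axis c 1) = 0"
      by (simp add: vec_eq_iff axis_def)
    then show "proj blk i D $ c = D $ c"
      using D[of "axis c 1"] by (auto simp: inner_axis')
  qed
qed

lemma block_has_derivative:
  fixes \<phi> :: "real^'c::finite \<Rightarrow> real"
  assumes "\<And>x. GDERIV (\<lambda>v. \<phi> (x + proj blk i v)) 0 :> G x"
  shows "((\<lambda>v. \<phi> (y + proj blk i v)) has_derivative (\<lambda>h. G (y + proj blk i v) \<bullet> h)) (at v)"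
proof -
  define x where "x = y + proj blk i v"
  have "((\<lambda>h. \<phi> (x + proj blk i h)) has_derivative (\<lambda>h. h \<bullet> G x)) (at 0)"
    using assms by (simp add: gderiv_def)
  moreover have "((\<lambda>w. w - v) has_derivative (\<lambda>h. h)) (at v)"
    by (auto intro!: derivative_eq_intros)
  ultimately have "((\<lambda>w. \<phi> (x + proj blk i (w - v))) has_derivative (\<lambda>h. h \<bullet> G x)) (at v)"
    using has_derivative_compose[of "\<lambda>w. w - v"] by fastforce
  moreover have "(\<lambda>w. \<phi> (x + proj blk i (w - v))) = (\<lambda>w. \<phi> (y + proj blk i w))"
    by (simp add: x_def proj_diff)
  ultimately show ?thesis
    by (simp add: x_def inner_commute)
qed

section \<open>Local steps within a round\<close>

locale convex_smooth_game =
  fixes n :: nat and blk :: "'c::finite \<Rightarrow> nat"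
    and f :: "nat \<Rightarrow> real^'c \<Rightarrow> real" and grad :: "nat \<Rightarrow> real^'c \<Rightarrow> real^'c"
    and L :: "nat \<Rightarrow> real"
  assumes n: "n \<ge> 1"
    and blk_range: "\<forall>c. blk c < n"
    and grad: "\<forall>i<n. \<forall>x. GDERIV (\<lambda>v. f i (x + proj blk i v)) 0 :> grad i x"
    and CVX: "\<forall>i<n. \<forall>x. convex_on UNIV (\<lambda>v. f i (x + proj blk i v))"
    and SM: "\<forall>i<n. L i > 0 \<and> (\<forall>x u w. norm (grad i (x + proj blk i u) - grad i (x + proj blk i w))
                 \<le> L i * norm (proj blk i u - proj blk i w))"
begin

definition Lmax :: real where "Lmax = Max (L ` {..<n})"

lemma L_le_Lmax: "i < n \<Longrightarrow> L i \<le> Lmax"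
  unfolding Lmax_def by (intro Max_ge) auto

lemma Lmax_pos: "0 < Lmax"
  using SM L_le_Lmax[of 0] n by fastforce

lemma proj_grad: "i < n \<Longrightarrow> proj blk i (grad i x) = grad i x"
  using grad by (intro block_gradient_in_block[where \<phi> = "f i"]) auto

lemma grad_nth_outside_block: "i < n \<Longrightarrow> blk c \<noteq> i \<Longrightarrow> grad i x $ c = 0"
  using proj_grad[of i x] by (metis proj_nth)

lemma proj_joint_grad: "i < n \<Longrightarrow> proj blk i (joint_grad grad blk x) = grad i x"
  by (auto simp: vec_eq_iff joint_grad_def grad_nth_outside_block)

lemma block_convex: "i < n \<Longrightarrow> convex_on UNIV (\<lambda>v. f i (y + proj blk i v))"
  using CVX by blast

lemma block_derivative:
  "i < n \<Longrightarrow> ((\<lambda>v. f i (y + proj blk i v)) has_derivative (\<lambda>h. grad i (y + proj blk i v) \<bullet> h)) (at v)"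
  using grad by (intro block_has_derivative) auto

lemma block_gradient_lipschitz:
  assumes "i < n"
  shows "norm (grad i (y + proj blk i u) - grad i (y + proj blk i w)) \<le> L i * norm (u - w)"
proof -
  have "norm (grad i (y + proj blk i u) - grad i (y + proj blk i w)) \<le> L i * norm (proj blk i u - proj blk i w)"
    using SM assms by blast
  also have "\<dots> \<le> L i * norm (u - w)"
    using SM assms norm_proj_le[of blk i "u - w"] by (simp add: proj_diff)
  finally show ?thesis .
qed

definition local_iterate :: "real \<Rightarrow> real^'c \<Rightarrow> nat \<Rightarrow> real^'c" where
  "local_iterate \<gamma> y k = (local_step grad blk \<gamma> y ^^ k) y"

definition local_direction :: "real \<Rightarrow> real^'c \<Rightarrow> nat \<Rightarrow> real^'c" where
  "local_direction \<gamma> y k = (\<chi> c. grad (blk c) (y + proj blk (blk c) (local_iterate \<gamma> y k - y)) $ c)"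

lemma local_iterate_0 [simp]: "local_iterate \<gamma> y 0 = y"
  by (simp add: local_iterate_def)

lemma local_iterate_Suc: "local_iterate \<gamma> y (Suc k) = local_iterate \<gamma> y k - \<gamma> *\<^sub>R local_direction \<gamma> y k"
  by (simp add: local_iterate_def local_direction_def local_step_def vec_eq_iff)

lemma local_iterate_eq_sum: "local_iterate \<gamma> y k = y - \<gamma> *\<^sub>R (\<Sum>j<k. local_direction \<gamma> y j)"
  by (induction k) (simp_all add: local_iterate_Suc scaleR_right_distrib)

lemma local_direction_0: "local_direction \<gamma> y 0 = joint_grad grad blk y"
  by (simp add: local_direction_def joint_grad_def)

lemma proj_local_direction:
  assumes "i < n"
  shows "proj blk i (local_direction \<gamma> y k) = grad i (y + proj blk i (local_iterate \<gamma> y k - y))"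
  using assms by (auto simp: vec_eq_iff local_direction_def grad_nth_outside_block)

lemma local_iterate_block_bounds:
  fixes y :: "real^'c"
  assumes i: "i < n" and \<gamma>: "0 < \<gamma>" "\<gamma> * Lmax \<le> 1"
  defines "w k \<equiv> proj blk i (local_iterate \<gamma> y k - y)"
  shows "norm (grad i (y + w k)) \<le> norm (grad i y) \<and> norm (w k) \<le> \<gamma> * real k * norm (grad i y)"
proof (induction k)
  case 0
  then show ?case by (simp add: w_def)
next
  case (Suc k)
  let ?G = "\<lambda>v. grad i (y + proj blk i v)"
  have proj_w [simp]: "proj blk i (w j) = w j" for j
    by (simp add: w_def)
  have "local_iterate \<gamma> y (Suc k) - y = (local_iterate \<gamma> y k - y) - \<gamma> *\<^sub>R local_direction \<gamma> y k"
    by (simp add: local_iterate_Suc)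
  then have w_Suc: "w (Suc k) = w k - \<gamma> *\<^sub>R ?G (w k)"
    unfolding w_def by (simp add: proj_diff proj_scaleR proj_local_direction[OF i])
  have Li: "0 < L i"
    using SM i by blast
  have "\<gamma> * L i \<le> \<gamma> * Lmax"
    using L_le_Lmax[OF i] \<gamma> by simp
  with \<gamma> have \<gamma>Li: "\<gamma> * L i \<le> 1"
    by linarith
  have "norm (?G (w k - \<gamma> *\<^sub>R ?G (w k))) \<le> norm (?G (w k))"
    by (rule gradient_step_norm_le[OF block_convex[OF i] block_derivative[OF i]
          block_gradient_lipschitz[OF i] Li \<gamma>(1) \<gamma>Li])
  then have "norm (grad i (y + w (Suc k))) \<le> norm (grad i (y + w k))"
    by (simp add: w_Suc proj_diff proj_scaleR proj_grad[OF i])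
  moreover have "norm (w (Suc k)) \<le> norm (w k) + \<gamma> * norm (grad i (y + w k))"
    unfolding w_Suc using norm_triangle_ineq4[of "w k" "\<gamma> *\<^sub>R ?G (w k)"] \<gamma>
    by (simp add: w_def)
  moreover have "\<gamma> * norm (grad i (y + w k)) \<le> \<gamma> * norm (grad i y)"
    using Suc.IH \<gamma> by simp
  ultimately show ?case
    using Suc.IH by (simp add: algebra_simps)
qed

lemma local_direction_drift:
  assumes \<gamma>: "0 < \<gamma>" "\<gamma> * Lmax \<le> 1"
  shows "norm (local_direction \<gamma> y k - local_direction \<gamma> y 0)
           \<le> Lmax * \<gamma> * real k * norm (joint_grad grad blk y)"
proof -
  define F where "F = joint_grad grad blk y"
  define c where "c = Lmax * \<gamma> * real k"
  define \<delta> where "\<delta> = local_direction \<gamma> y k - local_direction \<gamma> y 0"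
  have c0: "0 \<le> c"
    unfolding c_def using Lmax_pos \<gamma> by simp
  have block: "norm (proj blk i \<delta>) \<le> c * norm (proj blk i F)" if i: "i < n" for i
  proof -
    have "proj blk i \<delta> = grad i (y + proj blk i (proj blk i (local_iterate \<gamma> y k - y)))
        - grad i (y + proj blk i 0)"
      using proj_local_direction[OF i, of \<gamma> y k] proj_local_direction[OF i, of \<gamma> y 0]
      by (simp add: \<delta>_def proj_diff)
    then have "norm (proj blk i \<delta>) \<le> L i * norm (proj blk i (local_iterate \<gamma> y k - y))"
      using block_gradient_lipschitz[OF i, of y "proj blk i (local_iterate \<gamma> y k - y)" 0] by simp
    also have "\<dots> \<le> Lmax * (\<gamma> * real k * norm (grad i y))"
      using local_iterate_block_bounds[OF i \<gamma>, of y k] L_le_Lmax[OF i] SM i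
      by (intro mult_mono) auto
    also have "\<dots> = c * norm (proj blk i F)"
      by (simp add: c_def F_def proj_joint_grad[OF i])
    finally show ?thesis .
  qed
  have "(norm \<delta>)\<^sup>2 = (\<Sum>i<n. (norm (proj blk i \<delta>))\<^sup>2)"
    using blk_range by (intro power2_norm_eq_sum_proj) blast
  also have "\<dots> \<le> (\<Sum>i<n. (c * norm (proj blk i F))\<^sup>2)"
    using block by (intro sum_mono power_mono) auto
  also have "\<dots> = (c * norm F)\<^sup>2"
    using blk_range power2_norm_eq_sum_proj[of blk n F]
    by (simp add: power_mult_distrib sum_distrib_left)
  finally have "(norm \<delta>)\<^sup>2 \<le> (c * norm F)\<^sup>2" .
  then show ?thesis
    unfolding \<delta>_def c_def F_def by (rule power2_le_imp_le) (use c0 in \<open>simp add: c_def\<close>)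
qed

end

section \<open>Convergence of deterministic PEARL-SGD\<close>

locale pearl_setting = convex_smooth_game n blk f grad L
  for n and blk :: "'c::finite \<Rightarrow> nat" and f grad L +
  fixes \<mu> ell \<gamma> :: real and \<tau> :: nat and xs
  assumes QSM_mu: "\<mu> > 0"
    and QSM: "\<forall>x. inner (joint_grad grad blk x) (x - xs) \<ge> \<mu> * (norm (x - xs))\<^sup>2"
    and SCO_l: "ell > 0"
    and SCO: "\<forall>x. inner (joint_grad grad blk x) (x - xs) \<ge> (1 / ell) * (norm (joint_grad grad blk x))\<^sup>2"
    and tau: "\<tau> \<ge> 1"
    and gamma_pos: "\<gamma> > 0"
    and gamma_le: "\<gamma> \<le> 1 / (ell * real \<tau> + 2 * (real \<tau> - 1) * Max (L ` {..<n}) * sqrt (ell / \<mu>))"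
begin

lemma cocoercive_bound:
  "(norm (joint_grad grad blk x))\<^sup>2 \<le> ell * (joint_grad grad blk x \<bullet> (x - xs))"
  using SCO SCO_l by (simp add: field_simps)

lemma mu_le_ell: "\<mu> \<le> ell"
proof -
  define r :: "real^'c" where "r = (\<chi> c. 1)"
  have "r \<noteq> 0"
    by (simp add: r_def vec_eq_iff)
  then show ?thesis
    using strong_monotone_constant_le_cocoercive_constant[OF QSM_mu less_imp_le[OF SCO_l],
        of r "joint_grad grad blk (xs + r)"]
      QSM[rule_format, of "xs + r"] cocoercive_bound[of "xs + r"] by auto
qed

lemma step_condition: "\<gamma> * (ell * real \<tau> + 2 * (real \<tau> - 1) * Lmax * sqrt (ell / \<mu>)) \<le> 1"
proof -
  have "0 < ell * real \<tau>"
    using SCO_l tau by simp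
  moreover have "0 \<le> 2 * (real \<tau> - 1) * Lmax * sqrt (ell / \<mu>)"
    using tau Lmax_pos SCO_l QSM_mu by simp
  ultimately show ?thesis
    using gamma_le unfolding Lmax_def[symmetric] by (simp add: le_divide_eq mult.commute)
qed

lemma gamma_Lmax_le:
  assumes "2 \<le> \<tau>"
  shows "\<gamma> * Lmax \<le> 1"
proof -
  have "1 \<le> sqrt (ell / \<mu>)"
    using mu_le_ell QSM_mu by simp
  moreover have "1 \<le> 2 * (real \<tau> - 1)"
    using assms by simp
  ultimately have "1 \<le> 2 * (real \<tau> - 1) * sqrt (ell / \<mu>)"
    using mult_mono[of 1 "2 * (real \<tau> - 1)" 1 "sqrt (ell / \<mu>)"] by simp
  then have "\<gamma> * Lmax \<le> \<gamma> * ((2 * (real \<tau> - 1) * sqrt (ell / \<mu>)) * Lmax)"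
    using gamma_pos Lmax_pos by (intro mult_left_mono) auto
  also have "\<dots> \<le> 1"
  proof -
    have "0 \<le> \<gamma> * (ell * real \<tau>)"
      using gamma_pos SCO_l by simp
    then show ?thesis
      using step_condition by (simp add: algebra_simps)
  qed
  finally show ?thesis .
qed

lemma round_drift:
  "norm (\<Sum>j<\<tau>. local_direction \<gamma> y j - local_direction \<gamma> y 0)
     \<le> (Lmax * \<gamma> * real \<tau> * (real \<tau> - 1) / 2) * norm (joint_grad grad blk y)"
proof -
  define F where "F = joint_grad grad blk y"
  have "norm (\<Sum>j<\<tau>. local_direction \<gamma> y j - local_direction \<gamma> y 0)
      \<le> (\<Sum>j<\<tau>. norm (local_direction \<gamma> y j - local_direction \<gamma> y 0))"
    by (rule norm_sum)
  also have "\<dots> \<le> (\<Sum>j<\<tau>. Lmax * \<gamma> * norm F * real j)"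
  proof (rule sum_mono)
    fix j assume j: "j \<in> {..<\<tau>}"
    show "norm (local_direction \<gamma> y j - local_direction \<gamma> y 0) \<le> Lmax * \<gamma> * norm F * real j"
    proof (cases "j = 0")
      case False
      with j have "\<gamma> * Lmax \<le> 1"
        by (intro gamma_Lmax_le) auto
      then show ?thesis
        using local_direction_drift[OF gamma_pos] by (simp add: F_def algebra_simps)
    qed simp
  qed
  also have "\<dots> = Lmax * \<gamma> * norm F * (\<Sum>j<\<tau>. real j)"
    by (simp add: sum_distrib_left)
  also have "(\<Sum>j<m. real j) = real m * (real m - 1) / 2" for m
    by (induction m) (simp_all add: field_simps)
  finally show ?thesis
    by (simp add: F_def algebra_simps)
qed

lemma pearl_round_contraction:
  "(norm (pearl_round grad blk \<gamma> \<tau> y - xs))\<^sup>2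
     \<le> (1 - \<gamma> * real \<tau> * \<mu> * pearl_zeta \<mu> ell Lmax \<gamma> (real \<tau>)) * (norm (y - xs))\<^sup>2"
proof -
  define F where "F = joint_grad grad blk y"
  define E where "E = (\<Sum>j<\<tau>. local_direction \<gamma> y j - local_direction \<gamma> y 0)"
  define r where "r = y - xs"
  define \<zeta> where "\<zeta> = pearl_zeta \<mu> ell Lmax \<gamma> (real \<tau>)"
  have T: "1 \<le> real \<tau>"
    using tau by simp
  have "pearl_round grad blk \<gamma> \<tau> y = y - \<gamma> *\<^sub>R (E + real \<tau> *\<^sub>R F)"
    using local_iterate_eq_sum[of \<gamma> y \<tau>]
    by (simp add: pearl_round_def local_iterate_def E_def F_def local_direction_0 sum_subtractf
      sum_constant_scaleR del: sum_constant)
  then have round: "pearl_round grad blk \<gamma> \<tau> y - xs = r - (\<gamma> * real \<tau>) *\<^sub>R F - \<gamma> *\<^sub>R E"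
    by (simp add: r_def algebra_simps)
  have sF: "\<mu> * (norm r)\<^sup>2 \<le> F \<bullet> r"
    using QSM by (simp add: F_def r_def)
  have aF: "(norm F)\<^sup>2 \<le> ell * (F \<bullet> r)"
    unfolding F_def r_def by (rule cocoercive_bound)
  have "(norm (pearl_round grad blk \<gamma> \<tau> y - xs))\<^sup>2
      \<le> (norm r)\<^sup>2 - (F \<bullet> r) * (2 * \<gamma> * real \<tau> - \<gamma>\<^sup>2 * (real \<tau>)\<^sup>2 * ell
           - 2 * \<gamma> * (Lmax * \<gamma> * real \<tau> * (real \<tau> - 1) / 2) * sqrt (ell / \<mu>)
           - \<gamma>\<^sup>2 * (Lmax * \<gamma> * real \<tau> * (real \<tau> - 1) / 2)\<^sup>2 * ell)"
    unfolding round
  proof (rule perturbed_gradient_step_bound[OF QSM_mu _ _ _ _ _ sF aF])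
    have "0 \<le> \<gamma> * (2 * (real \<tau> - 1) * Lmax * sqrt (ell / \<mu>))"
      using gamma_pos tau Lmax_pos SCO_l QSM_mu by simp
    then show "\<gamma> * ell * real \<tau> \<le> 1"
      using step_condition by (simp add: algebra_simps)
    show "norm E \<le> Lmax * \<gamma> * real \<tau> * (real \<tau> - 1) / 2 * norm F"
      unfolding E_def F_def by (rule round_drift)
  qed (use SCO_l gamma_pos T Lmax_pos in auto)
  also have "\<dots> \<le> (norm r)\<^sup>2 - (F \<bullet> r) * (\<gamma> * real \<tau> * \<zeta>)"
  proof -
    have "0 \<le> F \<bullet> r"
      using sF QSM_mu by (metis mult_nonneg_nonneg order_trans less_imp_le zero_le_power2)
    with pearl_zeta_le_round_coefficient[OF QSM_mu mu_le_ell less_imp_le[OF gamma_pos] T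
        less_imp_le[OF Lmax_pos] step_condition]
    show ?thesis
      unfolding \<zeta>_def by (simp add: mult_left_mono)
  qed
  also have "\<dots> \<le> (norm r)\<^sup>2 - (\<mu> * (norm r)\<^sup>2) * (\<gamma> * real \<tau> * \<zeta>)"
    using pearl_zeta_nonneg[OF QSM_mu less_imp_le[OF SCO_l] less_imp_le[OF gamma_pos] T
        less_imp_le[OF Lmax_pos] step_condition] sF gamma_pos
    unfolding \<zeta>_def by (intro diff_left_mono mult_right_mono) auto
  finally show ?thesis
    by (simp add: \<zeta>_def r_def algebra_simps)
qed

lemma pearl_convergence:
  "(norm (pearl grad blk \<gamma> \<tau> R x0 - xs))\<^sup>2
     \<le> (1 - \<gamma> * real \<tau> * \<mu> * pearl_zeta \<mu> ell Lmax \<gamma> (real \<tau>)) ^ R * (norm (x0 - xs))\<^sup>2"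
proof (induction R)
  case 0
  then show ?case by (simp add: pearl_def)
next
  case (Suc R)
  let ?c = "1 - \<gamma> * real \<tau> * \<mu> * pearl_zeta \<mu> ell Lmax \<gamma> (real \<tau>)"
  have "0 \<le> ?c"
    using pearl_contraction_factor_nonneg[OF QSM_mu mu_le_ell less_imp_le[OF gamma_pos] _
        less_imp_le[OF Lmax_pos] step_condition] tau by simp
  have "(norm (pearl grad blk \<gamma> \<tau> (Suc R) x0 - xs))\<^sup>2 \<le> ?c * (norm (pearl grad blk \<gamma> \<tau> R x0 - xs))\<^sup>2"
    using pearl_round_contraction by (simp add: pearl_def)
  also have "\<dots> \<le> ?c * (?c ^ R * (norm (x0 - xs))\<^sup>2)"
    using Suc.IH \<open>0 \<le> ?c\<close> by (rule mult_left_mono)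
  finally show ?case
    by simp
qed

end

theorem theorem1:
  fixes n :: nat and blk :: "'c::finite \<Rightarrow> nat"
    and f :: "nat \<Rightarrow> real^'c \<Rightarrow> real" and grad :: "nat \<Rightarrow> real^'c \<Rightarrow> real^'c"
    and L :: "nat \<Rightarrow> real" and \<mu> ell \<gamma> :: real and \<tau> R :: nat
    and x0 xs :: "real^'c"
  assumes n: "n \<ge> 1"
    and blk_range: "\<forall>c. blk c < n"
    and blk_nonempty: "\<forall>i<n. \<exists>c. blk c = i"
    and grad: "\<forall>i<n. \<forall>x. GDERIV (\<lambda>v. f i (x + proj blk i v)) 0 :> grad i x"
    and CVX: "\<forall>i<n. \<forall>x. convex_on UNIV (\<lambda>v. f i (x + proj blk i v))"
    and SM: "\<forall>i<n. L i > 0 \<and> (\<forall>x u w. norm (grad i (x + proj blk i u) - grad i (x + proj blk i w))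
                 \<le> L i * norm (proj blk i u - proj blk i w))"
    and QSM_root: "joint_grad grad blk xs = 0"
    and QSM_unique: "\<forall>y. joint_grad grad blk y = 0 \<longrightarrow> y = xs"
    and QSM_mu: "\<mu> > 0"
    and QSM: "\<forall>x. inner (joint_grad grad blk x) (x - xs) \<ge> \<mu> * (norm (x - xs))\<^sup>2"
    and SCO_l: "ell > 0"
    and SCO: "\<forall>x. inner (joint_grad grad blk x) (x - xs) \<ge> (1 / ell) * (norm (joint_grad grad blk x))\<^sup>2"
    and tau: "\<tau> \<ge> 1" and R: "R \<ge> 1"
    and gamma_pos: "\<gamma> > 0"
    and gamma_le: "\<gamma> \<le> 1 / (ell * real \<tau> + 2 * (real \<tau> - 1) * Max (L ` {..<n}) * sqrt (ell / \<mu>))"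
  shows "(norm (pearl grad blk \<gamma> \<tau> R x0 - xs))\<^sup>2
         \<le> (1 - \<gamma> * real \<tau> * \<mu> *
              (2 - \<gamma> * ell * real \<tau> - 2 * (real \<tau> - 1) * \<gamma> * Max (L ` {..<n}) * sqrt (ell / \<mu> / 3))) ^ R
           * (norm (x0 - xs))\<^sup>2"
proof -
  interpret pearl_setting n blk f grad L \<mu> ell \<gamma> \<tau> xs
    using n blk_range grad CVX SM QSM_mu QSM SCO_l SCO tau gamma_pos gamma_le
    by unfold_locales
  show ?thesis
    using pearl_convergence[of R x0] unfolding Lmax_def pearl_zeta_def .
qed

end
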